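(* Let $B_1,B_2$ be independent standard Brownian motions, $c_1,c_2\in\mathbb R$, $\gamma_1,\gamma_2\in[0,2)$, $a\le 1$. For $\varepsilon\in(0,1)$ let $A_\varepsilon=\{(t,s_1,s_2)\in[0,1]^3:\max(s_1,s_2)\le t\le\varepsilon\}$. Then for every $\delta>0$ there exists $\varepsilon=\varepsilon(\delta)\in(0,1)$ such that, as $u\to\infty$, $$\mathbb P\Big(\exists (t,s_1,s_2)\in A_\varepsilon:\ B_1(t)-c_1t-\gamma_1(B_1(s_1)-c_1s_1)>u,\ B_2(t)-c_2t-\gamma_2(B_2(s_2)-c_2s_2)>au\Big)=o\big(e^{-\delta u^2}\big).$$ *)

theory Defs
  imports "HOL-Probability.Probability" "HOL-Library.Landau_Symbols"
begin

definition standard_BM :: "'a measure \<Rightarrow> (real \<Rightarrow> 'a \<Rightarrow> real) \<Rightarrow> bool" where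
  "standard_BM M B \<longleftrightarrow>
     prob_space M \<and>
     (\<forall>t\<ge>0. B t \<in> borel_measurable M) \<and>
     (\<forall>\<omega>\<in>space M. B 0 \<omega> = 0 \<and> continuous_on {0..} (\<lambda>t. B t \<omega>)) \<and>
     (\<forall>s t. 0 \<le> s \<and> s < t \<longrightarrow>
        distributed M lborel (\<lambda>\<omega>. B t \<omega> - B s \<omega>) (normal_density 0 (sqrt (t - s)))) \<and>
     (\<forall>(n::nat) (ts::nat \<Rightarrow> real). 0 \<le> ts 0 \<and> (\<forall>i<n. ts i < ts (Suc i)) \<longrightarrow>
        prob_space.indep_vars M (\<lambda>_. borel) (\<lambda>i \<omega>. B (ts (Suc i)) \<omega> - B (ts i) \<omega>) {..<n})"

definition indep_processes :: "'a measure \<Rightarrow> (real \<Rightarrow> 'a \<Rightarrow> real) \<Rightarrow> (real \<Rightarrow> 'a \<Rightarrow> real) \<Rightarrow> bool" where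
  "indep_processes M X Y \<longleftrightarrow>
     prob_space.indep_var M
       (PiM {0..} (\<lambda>_. borel)) (\<lambda>\<omega>. \<lambda>t\<in>{0..}. X t \<omega>)
       (PiM {0..} (\<lambda>_. borel)) (\<lambda>\<omega>. \<lambda>t\<in>{0..}. Y t \<omega>)"

definition A_set :: "real \<Rightarrow> (real \<times> real \<times> real) set" where
  "A_set \<epsilon> = {(t, s1, s2). t \<in> {0..1} \<and> s1 \<in> {0..1} \<and> s2 \<in> {0..1} \<and>
                 max s1 s2 \<le> t \<and> t \<le> \<epsilon>}"

end

theory Submission
  imports Defs "HOL-Real_Asymp.Real_Asymp"
begin

text \<open>Only the first coordinate matters. If \<open>|B\<^sub>1| \<le> v\<close> on \<open>[0, \<epsilon>]\<close> with \<open>\<epsilon> \<le> 1\<close>, the functional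
  \<open>B\<^sub>1(t) - c\<^sub>1t - \<gamma>\<^sub>1(B\<^sub>1(s) - c\<^sub>1s)\<close> is at most \<open>(1 + \<gamma>\<^sub>1)(v + |c\<^sub>1|) \<le> 3(v + |c\<^sub>1|)\<close>, so exceeding \<open>u\<close>
  forces \<open>B\<^sub>1\<close> to leave \<open>[-v, v]\<close> for \<open>v = (u - 3|c\<^sub>1|)/3\<close>. Chaining over the dyadic points of \<open>[0, \<epsilon>]\<close>,
  with level-\<open>k\<close> increments allowed to reach \<open>v/4 \<cdot> (3/4)\<^sup>k\<close>, together with the Gaussian tail of each
  increment, bounds the probability of that by \<open>4 exp (-v\<^sup>2 / (32\<epsilon>))\<close>, which is \<open>o(exp (-\<delta>u\<^sup>2))\<close>
  as soon as \<open>1/(288\<epsilon>) > \<delta>\<close>.\<close>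

lemma normal_density_mult_exp:
  fixes \<sigma> l y :: real
  assumes "0 < \<sigma>"
  shows "normal_density 0 \<sigma> y * exp (l * y) = exp (l\<^sup>2 * \<sigma>\<^sup>2 / 2) * normal_density (l * \<sigma>\<^sup>2) \<sigma> y"
proof -
  have "- y\<^sup>2 / (2 * \<sigma>\<^sup>2) + l * y = l\<^sup>2 * \<sigma>\<^sup>2 / 2 + - (y - l * \<sigma>\<^sup>2)\<^sup>2 / (2 * \<sigma>\<^sup>2)"
    using assms by (simp add: power2_eq_square field_simps)
  then show ?thesis
    unfolding normal_density_def by (simp flip: exp_add)
qed

lemma nn_integral_normal_density_mult_exp:
  fixes \<sigma> l c :: real
  assumes "0 < \<sigma>" and "0 \<le> c"
  shows "(\<integral>\<^sup>+y. ennreal (c * (normal_density 0 \<sigma> y * exp (l * y))) \<partial>lborel)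
    = ennreal (c * exp (l\<^sup>2 * \<sigma>\<^sup>2 / 2))"
proof -
  have "ennreal (c * (normal_density 0 \<sigma> y * exp (l * y)))
      = ennreal (c * exp (l\<^sup>2 * \<sigma>\<^sup>2 / 2)) * ennreal (normal_density (l * \<sigma>\<^sup>2) \<sigma> y)" for y
    unfolding normal_density_mult_exp[OF \<open>0 < \<sigma>\<close>] mult.assoc[symmetric]
    by (rule ennreal_mult) (use assms in auto)
  then have "(\<integral>\<^sup>+y. ennreal (c * (normal_density 0 \<sigma> y * exp (l * y))) \<partial>lborel)
      = (\<integral>\<^sup>+y. ennreal (c * exp (l\<^sup>2 * \<sigma>\<^sup>2 / 2)) * ennreal (normal_density (l * \<sigma>\<^sup>2) \<sigma> y) \<partial>lborel)"
    by simp
  also have "\<dots> = ennreal (c * exp (l\<^sup>2 * \<sigma>\<^sup>2 / 2))"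
    using assms by (simp add: nn_integral_cmult nn_integral_eq_integral)
  finally show ?thesis .
qed

lemma normal_abs_tail_emeasure_le:
  fixes X :: "'a \<Rightarrow> real"
  assumes X: "distributed M lborel X (normal_density 0 \<sigma>)" and "0 < \<sigma>" and "0 \<le> x"
  shows "emeasure M {\<omega>\<in>space M. x < \<bar>X \<omega>\<bar>} \<le> ennreal (2 * exp (- x\<^sup>2 / (2 * \<sigma>\<^sup>2)))"
proof -
  \<comment> \<open>Chernoff bound with the optimal exponent \<open>l\<close>\<close>
  define l where "l = x / \<sigma>\<^sup>2"
  have "0 \<le> l" using assms by (simp add: l_def)
  define m where "m = exp (- l * x)"
  have indicator_le: "ennreal (normal_density 0 \<sigma> y) * indicator {y. x < \<bar>y\<bar>} y
      \<le> ennreal (m * (normal_density 0 \<sigma> y * exp (l * y)))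
       + ennreal (m * (normal_density 0 \<sigma> y * exp ((- l) * y)))" for y
  proof (cases "x < \<bar>y\<bar>")
    case True
    then have "l * x \<le> l * y \<or> l * x \<le> (- l) * y"
      using \<open>0 \<le> l\<close> mult_left_mono[of x "\<bar>y\<bar>" l] by (cases "0 \<le> y") auto
    then have "1 \<le> m * exp (l * y) \<or> 1 \<le> m * exp ((- l) * y)"
      unfolding m_def by (auto simp flip: exp_add)
    then have "1 \<le> m * exp (l * y) + m * exp ((- l) * y)"
      unfolding m_def by (auto intro: add_increasing add_increasing2)
    then have "normal_density 0 \<sigma> y * 1 \<le> normal_density 0 \<sigma> y * (m * exp (l * y) + m * exp ((- l) * y))"
      by (intro mult_left_mono) simp_all
    then have "normal_density 0 \<sigma> y \<le> m * (normal_density 0 \<sigma> y * exp (l * y))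
        + m * (normal_density 0 \<sigma> y * exp ((- l) * y))"
      by (simp add: algebra_simps)
    then have "ennreal (normal_density 0 \<sigma> y) \<le> ennreal (m * (normal_density 0 \<sigma> y * exp (l * y))
        + m * (normal_density 0 \<sigma> y * exp ((- l) * y)))"
      by (rule ennreal_leI)
    also have "\<dots> = ennreal (m * (normal_density 0 \<sigma> y * exp (l * y)))
        + ennreal (m * (normal_density 0 \<sigma> y * exp ((- l) * y)))"
      by (intro ennreal_plus) (simp_all add: m_def)
    moreover have "indicator {y. x < \<bar>y\<bar>} y = (1::ennreal)"
      using True by simp
    ultimately show ?thesis
      by (simp only: mult_1_right)
  qed simp
  have "emeasure M {\<omega>\<in>space M. x < \<bar>X \<omega>\<bar>}
      = (\<integral>\<^sup>+y. ennreal (normal_density 0 \<sigma> y) * indicator {y. x < \<bar>y\<bar>} y \<partial>lborel)"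
    using distributed_emeasure[OF X, of "{y. x < \<bar>y\<bar>}"] by (simp add: Int_def conj_commute vimage_def)
  also have "\<dots> \<le> (\<integral>\<^sup>+y. ennreal (m * (normal_density 0 \<sigma> y * exp (l * y)))
       + ennreal (m * (normal_density 0 \<sigma> y * exp ((- l) * y))) \<partial>lborel)"
    by (rule nn_integral_mono) (rule indicator_le)
  also have "\<dots> = ennreal (m * exp (l\<^sup>2 * \<sigma>\<^sup>2 / 2)) + ennreal (m * exp ((- l)\<^sup>2 * \<sigma>\<^sup>2 / 2))"
    using nn_integral_normal_density_mult_exp[OF \<open>0 < \<sigma>\<close>, where c = m and l = l]
      nn_integral_normal_density_mult_exp[OF \<open>0 < \<sigma>\<close>, where c = m and l = "- l"]
    by (simp add: nn_integral_add m_def)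
  also have "\<dots> = ennreal (2 * m * exp (l\<^sup>2 * \<sigma>\<^sup>2 / 2))"
    by (simp add: m_def flip: ennreal_plus)
  also have "2 * m * exp (l\<^sup>2 * \<sigma>\<^sup>2 / 2) = 2 * exp (- x\<^sup>2 / (2 * \<sigma>\<^sup>2))"
    using \<open>0 < \<sigma>\<close> unfolding m_def l_def
    by (simp flip: exp_add add: field_simps power2_eq_square)
  finally show ?thesis .
qed

lemma standard_BMD:
  assumes "standard_BM M B"
  shows standard_BM_prob_space: "prob_space M"
    and standard_BM_measurable: "0 \<le> t \<Longrightarrow> B t \<in> borel_measurable M"
    and standard_BM_zero: "\<omega> \<in> space M \<Longrightarrow> B 0 \<omega> = 0"
    and standard_BM_continuous: "\<omega> \<in> space M \<Longrightarrow> continuous_on {0..} (\<lambda>t. B t \<omega>)"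
    and standard_BM_increment_distributed: "0 \<le> s \<Longrightarrow> s < t \<Longrightarrow>
      distributed M lborel (\<lambda>\<omega>. B t \<omega> - B s \<omega>) (normal_density 0 (sqrt (t - s)))"
  using assms unfolding standard_BM_def by auto

lemma standard_BM_increment_tail:
  assumes BM: "standard_BM M B" and "0 \<le> s" "s < t" "0 \<le> x"
  shows "measure M {\<omega>\<in>space M. x < \<bar>B t \<omega> - B s \<omega>\<bar>} \<le> 2 * exp (- x\<^sup>2 / (2 * (t - s)))"
proof -
  interpret prob_space M by (rule standard_BM_prob_space[OF BM])
  have "ennreal (prob {\<omega>\<in>space M. x < \<bar>B t \<omega> - B s \<omega>\<bar>})
      \<le> ennreal (2 * exp (- x\<^sup>2 / (2 * (sqrt (t - s))\<^sup>2)))"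
    using normal_abs_tail_emeasure_le[OF standard_BM_increment_distributed[OF BM]] assms
    by (simp add: emeasure_eq_measure)
  then show ?thesis
    using assms by simp
qed

lemma dyadic_chaining_bound:
  fixes f :: "real \<Rightarrow> real" and e v q :: real
  assumes "f 0 = 0" and "0 \<le> v" and "0 \<le> q" and "q \<le> 1"
    and increments: "\<And>k j. j < (2::nat) ^ k \<Longrightarrow>
      \<bar>f ((real j + 1) * e / 2 ^ k) - f (real j * e / 2 ^ k)\<bar> \<le> v * (1 - q) * q ^ k"
  shows "j \<le> 2 ^ n \<Longrightarrow> \<bar>f (real j * e / 2 ^ n)\<bar> \<le> v * (1 - q ^ (n + 1))"
proof (induction n arbitrary: j)
  case 0
  then have "j = 0 \<or> j = 1" by auto
  then consider "j = 0" | "j = 1" by blast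
  then show ?case
  proof cases
    case 1
    then show ?thesis using assms by (simp add: mult_nonneg_nonneg)
  next
    case 2
    then show ?thesis using increments[of 0 0] \<open>f 0 = 0\<close> by simp
  qed
next
  case (Suc n)
  have halve: "real (2 * i) * e / 2 ^ Suc n = real i * e / 2 ^ n" for i by simp
  have finer: "v * (1 - q ^ (n + 1)) \<le> v * (1 - q ^ (Suc n + 1))"
  proof -
    have "q ^ (Suc n + 1) \<le> q ^ (n + 1)"
      using assms by (intro power_decreasing) auto
    then show ?thesis
      using assms by (intro mult_left_mono) auto
  qed
  define i where "i = j div 2"
  have "j = 2 * i \<or> j = 2 * i + 1"
    unfolding i_def by presburger
  then consider "j = 2 * i" | "j = 2 * i + 1"
    by blast
  then show ?case
  proof cases
    case 1
    then have "\<bar>f (real i * e / 2 ^ n)\<bar> \<le> v * (1 - q ^ (n + 1))"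
      using Suc by simp
    with 1 finer halve show ?thesis by simp
  next
    case 2
    then have j: "real j * e / 2 ^ Suc n = (real (2 * i) + 1) * e / 2 ^ Suc n"
      by simp
    have coarse: "\<bar>f (real (2 * i) * e / 2 ^ Suc n)\<bar> \<le> v * (1 - q ^ (n + 1))"
      using 2 Suc halve by simp
    have "\<bar>f ((real (2 * i) + 1) * e / 2 ^ Suc n) - f (real (2 * i) * e / 2 ^ Suc n)\<bar>
        \<le> v * (1 - q) * q ^ Suc n"
      using 2 Suc.prems by (intro increments) simp
    moreover have "v * (1 - q ^ (n + 1)) + v * (1 - q) * q ^ Suc n = v * (1 - q ^ (Suc n + 1))"
      by (simp add: algebra_simps)
    ultimately show ?thesis
      unfolding j using coarse by linarith
  qed
qed

lemma abs_le_of_dyadic_abs_le: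
  fixes f :: "real \<Rightarrow> real"
  assumes "continuous_on {0..e} f" and "0 < e"
    and dyadic: "\<And>n j. j \<le> (2::nat) ^ n \<Longrightarrow> \<bar>f (real j * e / 2 ^ n)\<bar> \<le> v"
    and t: "t \<in> {0..e}"
  shows "\<bar>f t\<bar> \<le> v"
proof -
  define j where "j n = nat \<lfloor>t * 2 ^ n / e\<rfloor>" for n :: nat
  define d where "d n = real (j n) * (e / 2 ^ n)" for n :: nat
  have j: "real (j n) = of_int \<lfloor>t * 2 ^ n / e\<rfloor>" for n
    unfolding j_def using t \<open>0 < e\<close> by simp
  have "j n \<le> 2 ^ n" for n
  proof -
    have "t * 2 ^ n / e \<le> 2 ^ n" using t \<open>0 < e\<close> by (simp add: field_simps)
    then have "\<lfloor>t * 2 ^ n / e\<rfloor> \<le> 2 ^ n" by (metis floor_mono floor_numeral_power)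
    then show ?thesis
      unfolding j_def by (simp add: nat_le_iff)
  qed
  then have bounded: "\<bar>f (d n)\<bar> \<le> v" for n
    using dyadic unfolding d_def by simp
  have d_le: "d n \<le> t" for n
  proof -
    have "real (j n) * (e / 2 ^ n) \<le> (t * 2 ^ n / e) * (e / 2 ^ n)"
      unfolding j using \<open>0 < e\<close> by (intro mult_right_mono) simp_all
    then show ?thesis
      unfolding d_def using \<open>0 < e\<close> by simp
  qed
  have d_ge: "t - e / 2 ^ n \<le> d n" for n
  proof -
    have "(t * 2 ^ n / e - 1) * (e / 2 ^ n) \<le> real (j n) * (e / 2 ^ n)"
      unfolding j using \<open>0 < e\<close> by (intro mult_right_mono) (linarith, simp)
    moreover have "(t * 2 ^ n / e - 1) * (e / 2 ^ n) = t - e / 2 ^ n"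
      using \<open>0 < e\<close> by (simp add: field_simps)
    ultimately show ?thesis
      unfolding d_def by simp
  qed
  have lower: "(\<lambda>n. t - e / 2 ^ n) \<longlonglongrightarrow> t"
    by real_asymp
  have "d \<longlonglongrightarrow> t"
    by (rule tendsto_sandwich[OF _ _ lower tendsto_const]) (use d_le d_ge in auto)
  moreover have "d n \<in> {0..e}" for n
    using d_le t \<open>0 < e\<close> unfolding d_def by (auto intro: order.trans)
  ultimately have "(\<lambda>n. \<bar>f (d n)\<bar>) \<longlonglongrightarrow> \<bar>f t\<bar>"
    using t by (intro tendsto_rabs continuous_on_tendsto_compose[OF assms(1)]) auto
  then show ?thesis
    using bounded by (intro LIMSEQ_le_const2) auto
qed

lemma abs_le_of_dyadic_increments:
  fixes f :: "real \<Rightarrow> real" and e v q :: real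
  assumes "continuous_on {0..e} f" and "0 < e" and "f 0 = 0" and "0 \<le> v" and "0 \<le> q" and "q \<le> 1"
    and "\<And>k j. j < (2::nat) ^ k \<Longrightarrow>
      \<bar>f ((real j + 1) * e / 2 ^ k) - f (real j * e / 2 ^ k)\<bar> \<le> v * (1 - q) * q ^ k"
    and "t \<in> {0..e}"
  shows "\<bar>f t\<bar> \<le> v"
proof (rule abs_le_of_dyadic_abs_le[OF assms(1,2) _ assms(8)])
  fix n j :: nat
  assume "j \<le> 2 ^ n"
  then have "\<bar>f (real j * e / 2 ^ n)\<bar> \<le> v * (1 - q ^ (n + 1))"
    using dyadic_chaining_bound[OF assms(3-7)] by blast
  also have "\<dots> \<le> v"
    using assms by (simp add: mult_left_le)
  finally show "\<bar>f (real j * e / 2 ^ n)\<bar> \<le> v" .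
qed

lemma two_pow_mult_exp_neg_le:
  fixes a :: real
  assumes "16 \<le> a"
  shows "2 ^ k * exp (- a * (9/8) ^ k) \<le> exp (- a) * (1/2) ^ k"
proof -
  have "1 + real k / 8 \<le> (1 + 1/8 :: real) ^ k"
    using Bernoulli_inequality[of "1/8" k] by simp
  then have "a * (1 + real k / 8) \<le> a * (9/8) ^ k"
    using assms by (intro mult_left_mono) auto
  moreover have "16 * real k \<le> a * real k"
    using assms by (intro mult_right_mono) auto
  ultimately have "a + real k * 2 \<le> a * (9/8) ^ k"
    by (simp add: algebra_simps)
  then have "exp (- a * (9/8) ^ k) \<le> exp (- a) * exp (-2) ^ k"
    by (simp flip: exp_add exp_of_nat_mult)
  have "2 * exp (-2::real) \<le> 1/2"
  proof -
    have "2 \<le> exp (1::real)"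
      using exp_ge_add_one_self[of 1] by simp
    then have "2 * 2 \<le> exp (1::real) * exp 1"
      by (intro mult_mono) auto
    then show ?thesis
      by (simp add: exp_minus field_simps flip: exp_add)
  qed
  have "2 ^ k * exp (- a * (9/8) ^ k) \<le> 2 ^ k * (exp (- a) * exp (-2) ^ k)"
    using \<open>exp (- a * (9/8) ^ k) \<le> exp (- a) * exp (-2) ^ k\<close> by simp
  also have "\<dots> = exp (- a) * (2 * exp (-2)) ^ k"
    by (simp add: power_mult_distrib)
  also have "\<dots> \<le> exp (- a) * (1/2) ^ k"
    using \<open>2 * exp (-2) \<le> 1/2\<close> by (intro mult_left_mono power_mono) auto
  finally show ?thesis .
qed

lemma standard_BM_dyadic_increment_tail:
  fixes B :: "real \<Rightarrow> 'a \<Rightarrow> real"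
  assumes BM: "standard_BM M B" and "0 < e" and "0 < v"
  shows "measure M {\<omega>\<in>space M.
      v / 4 * (3/4) ^ k < \<bar>B ((real j + 1) * e / 2 ^ k) \<omega> - B (real j * e / 2 ^ k) \<omega>\<bar>}
    \<le> 2 * exp (- (v\<^sup>2 / (32 * e)) * (9/8) ^ k)"
proof -
  have "(real j + 1) * e / 2 ^ k - real j * e / 2 ^ k = e / 2 ^ k"
    by (simp add: field_simps)
  moreover have "(9/8 :: real) ^ k = (3/4) ^ k * (3/4) ^ k * 2 ^ k"
    by (simp flip: power_mult_distrib)
  ultimately have exponent: "(v / 4 * (3/4) ^ k)\<^sup>2 / (2 * ((real j + 1) * e / 2 ^ k - real j * e / 2 ^ k))
      = v\<^sup>2 / (32 * e) * (9/8) ^ k"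
    using \<open>0 < e\<close> by (simp add: field_simps power2_eq_square)
  have "measure M {\<omega>\<in>space M.
      v / 4 * (3/4) ^ k < \<bar>B ((real j + 1) * e / 2 ^ k) \<omega> - B (real j * e / 2 ^ k) \<omega>\<bar>}
    \<le> 2 * exp (- (v / 4 * (3/4) ^ k)\<^sup>2 / (2 * ((real j + 1) * e / 2 ^ k - real j * e / 2 ^ k)))"
    using \<open>0 < e\<close> \<open>0 < v\<close> by (intro standard_BM_increment_tail[OF BM]) (auto simp: field_simps)
  then show ?thesis
    unfolding minus_divide_left[symmetric] exponent by simp
qed

lemma standard_BM_exceeds_imp_dyadic_increment_exceeds:
  fixes B :: "real \<Rightarrow> 'a \<Rightarrow> real"
  assumes BM: "standard_BM M B" and "0 < e" and "0 < v"
    and "\<omega> \<in> space M" and "t \<in> {0..e}" and "v < \<bar>B t \<omega>\<bar>"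
  shows "\<exists>k. \<exists>j < 2 ^ k. v / 4 * (3/4) ^ k < \<bar>B ((real j + 1) * e / 2 ^ k) \<omega> - B (real j * e / 2 ^ k) \<omega>\<bar>"
proof (rule ccontr)
  assume "\<not> ?thesis"
  then have increments: "\<bar>B ((real j + 1) * e / 2 ^ k) \<omega> - B (real j * e / 2 ^ k) \<omega>\<bar>
      \<le> v * (1 - 3/4) * (3/4) ^ k" if "j < 2 ^ k" for k j
    using that by force
  have "continuous_on {0..e} (\<lambda>t. B t \<omega>)"
    by (rule continuous_on_subset[OF standard_BM_continuous[OF BM \<open>\<omega> \<in> space M\<close>]]) auto
  then have "\<bar>B t \<omega>\<bar> \<le> v"
    by (rule abs_le_of_dyadic_increments[OF _ \<open>0 < e\<close> standard_BM_zero[OF BM \<open>\<omega> \<in> space M\<close>] _ _ _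
          increments \<open>t \<in> {0..e}\<close>]) (use \<open>0 < v\<close> in simp_all)
  with \<open>v < \<bar>B t \<omega>\<bar>\<close> show False
    by simp
qed

lemma standard_BM_sup_tail:
  fixes B :: "real \<Rightarrow> 'a \<Rightarrow> real"
  assumes BM: "standard_BM M B" and "0 < e" and "0 < v" and large: "16 \<le> v\<^sup>2 / (32 * e)"
    and S: "S \<subseteq> {\<omega>\<in>space M. \<exists>t\<in>{0..e}. v < \<bar>B t \<omega>\<bar>}"
  shows "measure M S \<le> 4 * exp (- (v\<^sup>2 / (32 * e)))"
proof -
  interpret prob_space M by (rule standard_BM_prob_space[OF BM])
  define a where "a = v\<^sup>2 / (32 * e)"
  define I where "I k j = {\<omega>\<in>space M.
    v / 4 * (3/4) ^ k < \<bar>B ((real j + 1) * e / 2 ^ k) \<omega> - B (real j * e / 2 ^ k) \<omega>\<bar>}" for k j :: nat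
  define level where "level k = (\<Union>j<2 ^ k. I k j)" for k :: nat
  have "I k j \<in> sets M" for k j
  proof -
    have [measurable]: "B ((real j + 1) * e / 2 ^ k) \<in> borel_measurable M"
      "B (real j * e / 2 ^ k) \<in> borel_measurable M"
      using \<open>0 < e\<close> by (auto intro!: standard_BM_measurable[OF BM])
    show ?thesis unfolding I_def by measurable
  qed
  then have level_sets: "level k \<in> sets M" for k
    unfolding level_def by auto
  have prob_level: "prob (level k) \<le> 2 * exp (- a) * (1/2) ^ k" for k
  proof -
    have "prob (level k) \<le> (\<Sum>j<2 ^ k. prob (I k j))"
      unfolding level_def by (rule finite_measure_subadditive_finite) (use \<open>\<And>k j. I k j \<in> sets M\<close> in auto)
    also have "\<dots> \<le> (\<Sum>j<(2::nat) ^ k. 2 * exp (- a * (9/8) ^ k))"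
      unfolding I_def a_def by (intro sum_mono standard_BM_dyadic_increment_tail[OF BM \<open>0 < e\<close> \<open>0 < v\<close>])
    also have "\<dots> = 2 * (2 ^ k * exp (- a * (9/8) ^ k))"
      by simp
    also have "\<dots> \<le> 2 * exp (- a) * (1/2) ^ k"
      using two_pow_mult_exp_neg_le[of a k] large unfolding a_def by linarith
    finally show ?thesis .
  qed
  have geometric: "(\<lambda>k. 2 * exp (- a) * (1/2 :: real) ^ k) sums (4 * exp (- a))"
    using sums_mult[OF geometric_sums[of "1/2 :: real"], of "2 * exp (- a)"] by simp
  have summable_level: "summable (\<lambda>k. prob (level k))"
    by (rule summable_comparison_test'[OF sums_summable[OF geometric]]) (use prob_level in auto)
  have "S \<subseteq> (\<Union>k. level k)"
  proof
    fix \<omega> assume "\<omega> \<in> S"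
    with S obtain t where "\<omega> \<in> space M" "t \<in> {0..e}" "v < \<bar>B t \<omega>\<bar>"
      by auto
    then obtain k j where "j < 2 ^ k"
      "v / 4 * (3/4) ^ k < \<bar>B ((real j + 1) * e / 2 ^ k) \<omega> - B (real j * e / 2 ^ k) \<omega>\<bar>"
      using standard_BM_exceeds_imp_dyadic_increment_exceeds[OF BM \<open>0 < e\<close> \<open>0 < v\<close>] by blast
    with \<open>\<omega> \<in> space M\<close> show "\<omega> \<in> (\<Union>k. level k)"
      unfolding level_def I_def by blast
  qed
  then have "prob S \<le> prob (\<Union>k. level k)"
    using level_sets by (intro finite_measure_mono) auto
  also have "\<dots> \<le> (\<Sum>k. prob (level k))"
    using level_sets summable_level by (intro finite_measure_subadditive_countably) auto
  also have "\<dots> \<le> (\<Sum>k. 2 * exp (- a) * (1/2) ^ k)"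
    by (rule suminf_le[OF prob_level summable_level sums_summable[OF geometric]])
  also have "\<dots> = 4 * exp (- a)"
    using geometric by (simp add: sums_iff)
  finally show ?thesis
    unfolding a_def .
qed

lemma reflected_drift_le:
  fixes f :: "real \<Rightarrow> real"
  assumes band: "\<And>x. x \<in> {0..\<epsilon>} \<Longrightarrow> \<bar>f x\<bar> \<le> v"
    and "\<epsilon> \<le> 1" and "0 \<le> \<gamma>" and "\<gamma> \<le> 2" and "0 \<le> s" and "s \<le> t" and "t \<le> \<epsilon>"
  shows "f t - c * t - \<gamma> * (f s - c * s) \<le> 3 * (v + \<bar>c\<bar>)"
proof -
  have drifted: "\<bar>f x - c * x\<bar> \<le> v + \<bar>c\<bar>" if "x \<in> {0..\<epsilon>}" for x
  proof -
    have "\<bar>c * x\<bar> \<le> \<bar>c\<bar>"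
      using that \<open>\<epsilon> \<le> 1\<close> by (simp add: abs_mult mult_left_le)
    then show ?thesis
      using band[OF that] by linarith
  qed
  have "\<gamma> * (- (f s - c * s)) \<le> \<gamma> * (v + \<bar>c\<bar>)"
    using drifted[of s] assms by (intro mult_left_mono) auto
  also have "\<dots> \<le> 2 * (v + \<bar>c\<bar>)"
    using band[of s] assms by (intro mult_right_mono) force+
  finally have "- (\<gamma> * (f s - c * s)) \<le> 2 * (v + \<bar>c\<bar>)"
    by (simp only: mult_minus_right)
  moreover have "f t - c * t \<le> v + \<bar>c\<bar>"
    using drifted[of t] assms by simp
  ultimately show ?thesis
    by (simp add: algebra_simps)
qed

lemma standard_BM_reflected_drift_tail:
  fixes B :: "real \<Rightarrow> 'a \<Rightarrow> real"
  assumes BM: "standard_BM M B" and "0 < \<epsilon>" and "\<epsilon> \<le> 1" and "0 \<le> \<gamma>" and "\<gamma> \<le> 2"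
    and "3 * \<bar>c\<bar> < u" and large: "16 \<le> (u - 3 * \<bar>c\<bar>)\<^sup>2 / (288 * \<epsilon>)"
    and S: "S \<subseteq> {\<omega>\<in>space M. \<exists>t s. 0 \<le> s \<and> s \<le> t \<and> t \<le> \<epsilon> \<and>
      u < B t \<omega> - c * t - \<gamma> * (B s \<omega> - c * s)}"
  shows "measure M S \<le> 4 * exp (- ((u - 3 * \<bar>c\<bar>)\<^sup>2 / (288 * \<epsilon>)))"
proof -
  define v where "v = (u - 3 * \<bar>c\<bar>) / 3"
  have "0 < v"
    using \<open>3 * \<bar>c\<bar> < u\<close> by (simp add: v_def)
  have exponent: "v\<^sup>2 / (32 * \<epsilon>) = (u - 3 * \<bar>c\<bar>)\<^sup>2 / (288 * \<epsilon>)"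
    by (simp add: v_def power_divide)
  have "S \<subseteq> {\<omega>\<in>space M. \<exists>t\<in>{0..\<epsilon>}. v < \<bar>B t \<omega>\<bar>}"
  proof
    fix \<omega> assume "\<omega> \<in> S"
    then obtain t s where "\<omega> \<in> space M" "0 \<le> s" "s \<le> t" "t \<le> \<epsilon>"
      and exceeds: "u < B t \<omega> - c * t - \<gamma> * (B s \<omega> - c * s)"
      using S by blast
    moreover have "B t \<omega> - c * t - \<gamma> * (B s \<omega> - c * s) \<le> 3 * (v + \<bar>c\<bar>)"
      if "\<And>x. x \<in> {0..\<epsilon>} \<Longrightarrow> \<bar>B x \<omega>\<bar> \<le> v"
      by (rule reflected_drift_le[where f = "\<lambda>x. B x \<omega>", OF that]) (use assms calculation in auto)
    moreover have "3 * (v + \<bar>c\<bar>) = u"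
      by (simp add: v_def field_simps)
    ultimately show "\<omega> \<in> {\<omega>\<in>space M. \<exists>t\<in>{0..\<epsilon>}. v < \<bar>B t \<omega>\<bar>}"
      by (force simp: not_le)
  qed
  then show ?thesis
    using standard_BM_sup_tail[OF BM \<open>0 < \<epsilon>\<close> \<open>0 < v\<close>] large unfolding exponent by simp
qed

lemma standard_BM_reflected_drift_tail_bigo:
  fixes B :: "real \<Rightarrow> 'a \<Rightarrow> real"
  assumes BM: "standard_BM M B" and "0 < \<epsilon>" and "\<epsilon> \<le> 1" and "0 \<le> \<gamma>" and "\<gamma> \<le> 2"
    and S: "\<And>u. S u \<subseteq> {\<omega>\<in>space M. \<exists>t s. 0 \<le> s \<and> s \<le> t \<and> t \<le> \<epsilon> \<and>
      u < B t \<omega> - c * t - \<gamma> * (B s \<omega> - c * s)}"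
  shows "(\<lambda>u. measure M (S u)) \<in> O(\<lambda>u. exp (- ((u - 3 * \<bar>c\<bar>)\<^sup>2 / (288 * \<epsilon>))))"
proof (rule bigoI[where c = 4])
  have "\<forall>\<^sub>F u in at_top. 16 * (288 * \<epsilon>) \<le> (u - 3 * \<bar>c\<bar>)\<^sup>2"
    by real_asymp
  moreover have "\<forall>\<^sub>F u in at_top. 3 * \<bar>c\<bar> < u"
    by (rule eventually_gt_at_top)
  ultimately show "\<forall>\<^sub>F u in at_top. norm (measure M (S u)) \<le> 4 * norm (exp (- ((u - 3 * \<bar>c\<bar>)\<^sup>2 / (288 * \<epsilon>))))"
  proof eventually_elim
    case (elim u)
    then have "16 \<le> (u - 3 * \<bar>c\<bar>)\<^sup>2 / (288 * \<epsilon>)"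
      using \<open>0 < \<epsilon>\<close> by (simp add: field_simps)
    with elim show ?case
      using standard_BM_reflected_drift_tail[OF BM assms(2-5) \<open>3 * \<bar>c\<bar> < u\<close> _ S] by simp
  qed
qed

lemma exp_neg_quadratic_smallo:
  fixes \<alpha> \<delta> c :: real
  assumes "\<delta> < \<alpha>"
  shows "(\<lambda>u. exp (- (\<alpha> * (u - c)\<^sup>2))) \<in> o(\<lambda>u. exp (- \<delta> * u\<^sup>2))"
proof (rule smalloI_tendsto)
  have "(\<lambda>u. exp (- (\<alpha> * (u - c)\<^sup>2)) / exp (- \<delta> * u\<^sup>2))
      = (\<lambda>u. exp (- (\<alpha> - \<delta>) * u\<^sup>2 + 2 * \<alpha> * c * u - \<alpha> * c\<^sup>2))"
    by (simp add: fun_eq_iff power2_eq_square algebra_simps flip: exp_diff)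
  moreover have "((\<lambda>u. exp (- (\<alpha> - \<delta>) * u\<^sup>2 + 2 * \<alpha> * c * u - \<alpha> * c\<^sup>2)) \<longlongrightarrow> 0) at_top"
    using assms by real_asymp
  ultimately show "((\<lambda>u. exp (- (\<alpha> * (u - c)\<^sup>2)) / exp (- \<delta> * u\<^sup>2)) \<longlongrightarrow> 0) at_top"
    by simp
qed simp

theorem lemma3p2:
  fixes M :: "'a measure" and B1 B2 :: "real \<Rightarrow> 'a \<Rightarrow> real"
    and c1 c2 \<gamma>1 \<gamma>2 a \<delta> :: real
  assumes "standard_BM M B1" and "standard_BM M B2"
    and "indep_processes M B1 B2"
    and "0 \<le> \<gamma>1" and "\<gamma>1 < 2" and "0 \<le> \<gamma>2" and "\<gamma>2 < 2"
    and "a \<le> 1" and "\<delta> > 0"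
  shows "\<exists>\<epsilon>. 0 < \<epsilon> \<and> \<epsilon> < 1 \<and>
    (\<lambda>u. measure M {\<omega> \<in> space M. \<exists>t s1 s2. (t, s1, s2) \<in> A_set \<epsilon> \<and>
        B1 t \<omega> - c1 * t - \<gamma>1 * (B1 s1 \<omega> - c1 * s1) > u \<and>
        B2 t \<omega> - c2 * t - \<gamma>2 * (B2 s2 \<omega> - c2 * s2) > a * u})
    \<in> o(\<lambda>u. exp (- \<delta> * u\<^sup>2))"
proof -
  define \<epsilon> where "\<epsilon> = 1 / (288 * (\<delta> + 1))"
  have "0 < \<epsilon>" "\<epsilon> < 1"
    using \<open>\<delta> > 0\<close> by (simp_all add: \<epsilon>_def)
  have exponent: "(u - 3 * \<bar>c1\<bar>)\<^sup>2 / (288 * \<epsilon>) = (\<delta> + 1) * (u - 3 * \<bar>c1\<bar>)\<^sup>2" for u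
    using \<open>\<delta> > 0\<close> by (simp add: \<epsilon>_def)
  let ?E = "\<lambda>u. {\<omega> \<in> space M. \<exists>t s1 s2. (t, s1, s2) \<in> A_set \<epsilon> \<and>
    B1 t \<omega> - c1 * t - \<gamma>1 * (B1 s1 \<omega> - c1 * s1) > u \<and>
    B2 t \<omega> - c2 * t - \<gamma>2 * (B2 s2 \<omega> - c2 * s2) > a * u}"
  have "(\<lambda>u. measure M (?E u)) \<in> O(\<lambda>u. exp (- ((u - 3 * \<bar>c1\<bar>)\<^sup>2 / (288 * \<epsilon>))))"
    using assms(4,5) \<open>0 < \<epsilon>\<close> \<open>\<epsilon> < 1\<close>
    by (intro standard_BM_reflected_drift_tail_bigo[OF assms(1)]) (auto simp: A_set_def)
  also have "(\<lambda>u. exp (- ((u - 3 * \<bar>c1\<bar>)\<^sup>2 / (288 * \<epsilon>)))) = (\<lambda>u. exp (- ((\<delta> + 1) * (u - 3 * \<bar>c1\<bar>)\<^sup>2)))"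
    by (simp only: exponent)
  also have "\<dots> \<in> o(\<lambda>u. exp (- \<delta> * u\<^sup>2))"
    by (rule exp_neg_quadratic_smallo) simp
  finally show ?thesis
    using \<open>0 < \<epsilon>\<close> \<open>\<epsilon> < 1\<close> by blast
qed

end
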